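(* Let $r,s\in\widetilde{\mathbb{K}}_{sm}$ with $r\neq0$, $s\neq0$ and $rs=0$. Then there exists a characteristic set $S\subseteq I$ such that $r|_S=0$ and $s|_S=0$.
   Context: Let $I=(0,1]$ and $\mathbb{K}\in\{\mathbb{R},\mathbb{C}\}$. $\widetilde{\mathbb{K}}_{sm}=\mathcal{E}_{M,sm}/\mathcal{N}_{sm}$ where $\mathcal{E}_{M,sm}$ is the set of nets $(r_\varepsilon)_{\varepsilon\in I}\in\mathbb{K}^I$ smooth in $\varepsilon$ with $|r_\varepsilon|=O(\varepsilon^{-N})$ as $\varepsilon\to0$ for some $N$, and $\mathcal{N}_{sm}$ those with $|r_\varepsilon|=O(\varepsilon^m)$ for all $m$. A subset $S\subseteq I$ is a characteristic set if $0\in\overline{S}$. For $r\in\widetilde{\mathbb{K}}_{sm}$ and a characteristic set $S$, $r|_S=0$ means: for a (equivalently, any) representative $(r_\varepsilon)_\varepsilon$ and every $m\in\mathbb{N}$ there is $\varepsilon_0>0$ with $|r_\varepsilon|<\varepsilon^m$ for all $\varepsilon\in S$ with $\varepsilon<\varepsilon_0$. *)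

theory Defs
  imports "HOL-Analysis.Analysis"
begin

text \<open>Nets are represented by functions on real numbers; only their values on
  I = (0,1] matter.  The parameter set I.\<close>

abbreviation I_set :: "real set" where "I_set \<equiv> {0<..1}"

definition smooth_net :: "(real \<Rightarrow> 'a::real_normed_vector) \<Rightarrow> bool" where
  "smooth_net r \<longleftrightarrow>
     (\<exists>f :: nat \<Rightarrow> real \<Rightarrow> 'a. (\<forall>x\<in>I_set. f 0 x = r x) \<and>
        (\<forall>k. \<forall>x\<in>I_set. (f k has_vector_derivative f (Suc k) x) (at x within I_set)))"

definition moderate_net :: "(real \<Rightarrow> 'a::real_normed_vector) \<Rightarrow> bool" where
  "moderate_net r \<longleftrightarrow>
     (\<exists>N::nat. \<exists>C. \<exists>e0>0. \<forall>e. 0 < e \<and> e < e0 \<longrightarrow> norm (r e) \<le> C * (1 / e) ^ N)"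

definition negligible_net :: "(real \<Rightarrow> 'a::real_normed_vector) \<Rightarrow> bool" where
  "negligible_net r \<longleftrightarrow>
     (\<forall>m::nat. \<exists>C. \<exists>e0>0. \<forall>e. 0 < e \<and> e < e0 \<longrightarrow> norm (r e) \<le> C * e ^ m)"

definition EMsm :: "(real \<Rightarrow> 'a::real_normed_vector) set" where
  "EMsm = {r. smooth_net r \<and> moderate_net r}"

definition characteristic_set :: "real set \<Rightarrow> bool" where
  "characteristic_set S \<longleftrightarrow> S \<subseteq> I_set \<and> 0 \<in> closure S"

text \<open>r|_S = 0, stated for a representative.\<close>
definition vanishes_on :: "(real \<Rightarrow> 'a::real_normed_vector) \<Rightarrow> real set \<Rightarrow> bool" where
  "vanishes_on r S \<longleftrightarrow>
     (\<forall>m::nat. \<exists>e0>0. \<forall>e\<in>S. e < e0 \<longrightarrow> norm (r e) < e ^ m)"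

end

theory Submission
  imports Defs
begin

text \<open>If \<open>r s\<close> is negligible, then on the set where \<open>|r| \<le> |s|\<close> we have \<open>|r|\<^sup>2 \<le> |r s|\<close>, so
  \<open>r\<close> is negligible there; the same holds for \<open>s\<close> on the complementary set. Both sets
  accumulate at \<open>0\<close>, since otherwise one of them would contain an interval \<open>(0, d)\<close>
  and \<open>r\<close> or \<open>s\<close> would be negligible. Smoothness is used only through continuity of
  \<open>|r| - |s|\<close>: by the intermediate value theorem the crossing set \<open>{|r| = |s|}\<close> itself
  accumulates at \<open>0\<close>, and it serves as the characteristic set for both nets.\<close>

lemma vanishes_on_subset:
  assumes "vanishes_on r T" "S \<subseteq> T"
  shows "vanishes_on r S"
  using assms unfolding vanishes_on_def by (meson subsetD)

lemma negligible_net_if_vanishes_on_interval: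
  assumes "d > 0" "vanishes_on r {0<..<d}"
  shows "negligible_net r"
  unfolding negligible_net_def
proof
  fix m
  obtain e0 where "e0 > 0" "\<forall>e\<in>{0<..<d}. e < e0 \<longrightarrow> norm (r e) < e ^ m"
    using assms(2) unfolding vanishes_on_def by blast
  then show "\<exists>C. \<exists>e0>0. \<forall>e. 0 < e \<and> e < e0 \<longrightarrow> norm (r e) \<le> C * e ^ m"
    using assms(1) by (intro exI[of _ 1] exI[of _ "min e0 d"]) auto
qed

lemma negligible_net_mult_commute:
  fixes r s :: "real \<Rightarrow> 'a::real_normed_div_algebra"
  assumes "negligible_net (\<lambda>e. r e * s e)"
  shows "negligible_net (\<lambda>e. s e * r e)"
  using assms unfolding negligible_net_def by (simp add: norm_mult mult.commute)

lemma vanishes_on_norm_le_if_negligible_mult: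
  fixes r s :: "real \<Rightarrow> 'a::real_normed_div_algebra"
  assumes "negligible_net (\<lambda>e. r e * s e)"
  shows "vanishes_on r {e. 0 < e \<and> norm (r e) \<le> norm (s e)}"
  unfolding vanishes_on_def
proof
  fix m
  obtain C e0 where "e0 > 0"
    and bound: "\<And>e. 0 < e \<and> e < e0 \<Longrightarrow> norm (r e * s e) \<le> C * e ^ (2 * m + 1)"
    using assms unfolding negligible_net_def by blast
  define D where "D = max C 1"
  have "D > 0" "C \<le> D" unfolding D_def by auto
  define e1 where "e1 = min e0 (1 / D)"
  have "norm (r e) < e ^ m" if "0 < e" "e < e1" "norm (r e) \<le> norm (s e)" for e
  proof -
    have "e < e0" "D * e < 1"
      using that \<open>D > 0\<close> unfolding e1_def by (auto simp: field_simps)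
    have "norm (r e) ^ 2 \<le> norm (r e * s e)"
      using that(3) by (simp add: power2_eq_square norm_mult mult_left_mono)
    also have "\<dots> \<le> D * e ^ (2 * m + 1)"
      using bound[of e] that \<open>e < e0\<close> \<open>C \<le> D\<close>
      by (meson order_trans mult_right_mono zero_le_power less_imp_le)
    also have "\<dots> = (D * e) * (e ^ m) ^ 2"
      by (simp add: power_add power_mult[symmetric] mult.commute mult.left_commute)
    also have "\<dots> < (e ^ m) ^ 2"
      using \<open>D * e < 1\<close> that(1) by simp
    finally show ?thesis
      using that(1) by (meson power_less_imp_less_base zero_le_power less_imp_le)
  qed
  moreover have "e1 > 0"
    using \<open>e0 > 0\<close> \<open>D > 0\<close> unfolding e1_def by auto
  ultimately show "\<exists>e0>0. \<forall>e\<in>{e. 0 < e \<and> norm (r e) \<le> norm (s e)}. e < e0 \<longrightarrow> norm (r e) < e ^ m"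
    by blast
qed

lemma smooth_net_continuous_on:
  assumes "smooth_net r"
  shows "continuous_on I_set r"
proof -
  obtain f where "\<forall>x\<in>I_set. f 0 x = r x"
    and "\<forall>k. \<forall>x\<in>I_set. (f k has_vector_derivative f (Suc k) x) (at x within I_set)"
    using assms unfolding smooth_net_def by blast
  then have "continuous_on I_set (f 0)"
    unfolding continuous_on_eq_continuous_within
    using has_vector_derivative_continuous by blast
  then show ?thesis
    using continuous_on_eq \<open>\<forall>x\<in>I_set. f 0 x = r x\<close> by blast
qed

lemma connected_nonvanishing_sign_cases:
  fixes g :: "'a::topological_space \<Rightarrow> real"
  assumes "connected S" "continuous_on S g" "\<forall>x\<in>S. g x \<noteq> 0"
  shows "(\<forall>x\<in>S. g x < 0) \<or> (\<forall>x\<in>S. g x > 0)"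
proof (rule ccontr)
  assume "\<not> ?thesis"
  then obtain a b where "a \<in> S" "b \<in> S" "g a \<le> 0" "g b \<ge> 0"
    by (auto simp: not_less)
  moreover have "connected (g ` S)"
    using assms(2,1) by (rule connected_continuous_image)
  ultimately have "0 \<in> g ` S"
    unfolding connected_iff_interval by blast
  then show False
    using assms(3) by auto
qed

lemma zero_in_closure_norm_crossings:
  fixes r s :: "real \<Rightarrow> 'a::real_normed_div_algebra"
  assumes "continuous_on I_set r" "continuous_on I_set s"
    and "\<not> negligible_net r" "\<not> negligible_net s"
    and rs: "negligible_net (\<lambda>e. r e * s e)"
  shows "0 \<in> closure {e\<in>I_set. norm (r e) = norm (s e)}"
proof (rule ccontr)
  assume "0 \<notin> closure {e\<in>I_set. norm (r e) = norm (s e)}"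
  then obtain d0 where "d0 > 0" and far: "\<forall>y\<in>{e\<in>I_set. norm (r e) = norm (s e)}. \<not> dist y 0 < d0"
    unfolding closure_approachable by blast
  define d where "d = min d0 1"
  define g where "g e = norm (r e) - norm (s e)" for e
  have "d > 0" "{0<..<d} \<subseteq> I_set"
    using \<open>d0 > 0\<close> unfolding d_def by auto
  have "continuous_on {0<..<d} g"
    unfolding g_def using assms(1,2) \<open>{0<..<d} \<subseteq> I_set\<close>
    by (auto intro!: continuous_intros intro: continuous_on_subset)
  moreover have "\<forall>x\<in>{0<..<d}. g x \<noteq> 0"
    using far \<open>{0<..<d} \<subseteq> I_set\<close> unfolding g_def d_def by (auto simp: dist_real_def)
  ultimately have "(\<forall>x\<in>{0<..<d}. g x < 0) \<or> (\<forall>x\<in>{0<..<d}. g x > 0)"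
    by (rule connected_nonvanishing_sign_cases[OF connected_Ioo])
  then consider "\<forall>x\<in>{0<..<d}. norm (r x) \<le> norm (s x)"
    | "\<forall>x\<in>{0<..<d}. norm (s x) \<le> norm (r x)"
    unfolding g_def by (meson diff_less_0_iff_less diff_gt_0_iff_gt less_imp_le)
  then show False
  proof cases
    case 1
    then have "vanishes_on r {0<..<d}"
      by (auto intro: vanishes_on_subset[OF vanishes_on_norm_le_if_negligible_mult[OF rs]])
    then show False
      using negligible_net_if_vanishes_on_interval \<open>d > 0\<close> assms(3) by blast
  next
    case 2
    then have "vanishes_on s {0<..<d}"
      by (auto intro: vanishes_on_subset[OF vanishes_on_norm_le_if_negligible_mult
            [OF negligible_net_mult_commute[OF rs]]])
    then show False
      using negligible_net_if_vanishes_on_interval \<open>d > 0\<close> assms(4) by blast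
  qed
qed

lemma zero_divisors_vanish_on_common_characteristic_set:
  fixes r s :: "real \<Rightarrow> 'a::real_normed_div_algebra"
  assumes "r \<in> EMsm" "s \<in> EMsm" "\<not> negligible_net r" "\<not> negligible_net s"
    and rs: "negligible_net (\<lambda>e. r e * s e)"
  shows "\<exists>S. characteristic_set S \<and> vanishes_on r S \<and> vanishes_on s S"
proof (intro exI conjI)
  let ?S = "{e\<in>I_set. norm (r e) = norm (s e)}"
  have "continuous_on I_set r" "continuous_on I_set s"
    using assms(1,2) smooth_net_continuous_on unfolding EMsm_def by auto
  then show "characteristic_set ?S"
    using zero_in_closure_norm_crossings assms(3-5) unfolding characteristic_set_def by blast
  show "vanishes_on r ?S"
    by (rule vanishes_on_subset[OF vanishes_on_norm_le_if_negligible_mult[OF rs]]) auto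
  show "vanishes_on s ?S"
    by (rule vanishes_on_subset[OF vanishes_on_norm_le_if_negligible_mult
          [OF negligible_net_mult_commute[OF rs]]]) auto
qed

theorem lemma4p17:
  shows "(\<forall>r s :: real \<Rightarrow> real. r \<in> EMsm \<longrightarrow> s \<in> EMsm \<longrightarrow>
            \<not> negligible_net r \<longrightarrow> \<not> negligible_net s \<longrightarrow>
            negligible_net (\<lambda>e. r e * s e) \<longrightarrow>
            (\<exists>S. characteristic_set S \<and> vanishes_on r S \<and> vanishes_on s S))
       \<and> (\<forall>r s :: real \<Rightarrow> complex. r \<in> EMsm \<longrightarrow> s \<in> EMsm \<longrightarrow>
            \<not> negligible_net r \<longrightarrow> \<not> negligible_net s \<longrightarrow>
            negligible_net (\<lambda>e. r e * s e) \<longrightarrow>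
            (\<exists>S. characteristic_set S \<and> vanishes_on r S \<and> vanishes_on s S))"
  using zero_divisors_vanish_on_common_characteristic_set[where 'a=real]
    zero_divisors_vanish_on_common_characteristic_set[where 'a=complex]
  by blast

end
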